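(* If the additive group of a ring $K$ is finitely generated, then $K$ is finitely separable.
   Context: Rings are associative and not necessarily unital. A ring $K$ is finitely separable if for every $a\in K$ and every subring $A\subseteq K$ with $a\notin A$ there exist a finite ring $F$ and a homomorphism $\varphi:K\to F$ with $\varphi(a)\notin\varphi(A)$. *)

theory Defs
  imports Main
begin

text \<open>Rings are associative, not necessarily unital: Isabelle's type class ring
  (semiring + ab_group_add, no unit) is exactly this notion.\<close>

inductive_set add_span :: "'a::ab_group_add set \<Rightarrow> 'a set" for S where
  gen: "s \<in> S \<Longrightarrow> s \<in> add_span S"
| zero: "0 \<in> add_span S"
| add: "x \<in> add_span S \<Longrightarrow> y \<in> add_span S \<Longrightarrow> x + y \<in> add_span S"
| neg: "x \<in> add_span S \<Longrightarrow> - x \<in> add_span S"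

definition add_fin_gen :: "'a::ab_group_add itself \<Rightarrow> bool" where
  "add_fin_gen _ \<longleftrightarrow> (\<exists>S::'a set. finite S \<and> add_span S = UNIV)"

definition subring :: "'a::ring set \<Rightarrow> bool" where
  "subring A \<longleftrightarrow> 0 \<in> A \<and> (\<forall>x\<in>A. \<forall>y\<in>A. x + y \<in> A \<and> - x \<in> A \<and> x * y \<in> A)"

definition is_ring :: "'b set \<Rightarrow> ('b \<Rightarrow> 'b \<Rightarrow> 'b) \<Rightarrow> ('b \<Rightarrow> 'b \<Rightarrow> 'b) \<Rightarrow> 'b \<Rightarrow> ('b \<Rightarrow> 'b) \<Rightarrow> bool" where
  "is_ring F pl ml z ng \<longleftrightarrow>
     z \<in> F \<and>
     (\<forall>x\<in>F. \<forall>y\<in>F. pl x y \<in> F \<and> ml x y \<in> F) \<and> (\<forall>x\<in>F. ng x \<in> F) \<and>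
     (\<forall>x\<in>F. \<forall>y\<in>F. \<forall>w\<in>F. pl (pl x y) w = pl x (pl y w)) \<and>
     (\<forall>x\<in>F. \<forall>y\<in>F. pl x y = pl y x) \<and>
     (\<forall>x\<in>F. pl z x = x) \<and>
     (\<forall>x\<in>F. pl (ng x) x = z) \<and>
     (\<forall>x\<in>F. \<forall>y\<in>F. \<forall>w\<in>F. ml (ml x y) w = ml x (ml y w)) \<and>
     (\<forall>x\<in>F. \<forall>y\<in>F. \<forall>w\<in>F. ml x (pl y w) = pl (ml x y) (ml x w)) \<and>
     (\<forall>x\<in>F. \<forall>y\<in>F. \<forall>w\<in>F. ml (pl x y) w = pl (ml x w) (ml y w))"

definition is_ring_hom :: "('a::ring \<Rightarrow> 'b) \<Rightarrow> 'b set \<Rightarrow> ('b \<Rightarrow> 'b \<Rightarrow> 'b) \<Rightarrow> ('b \<Rightarrow> 'b \<Rightarrow> 'b) \<Rightarrow> bool" where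
  "is_ring_hom \<phi> F pl ml \<longleftrightarrow>
     (\<forall>x. \<phi> x \<in> F) \<and> (\<forall>x y. \<phi> (x + y) = pl (\<phi> x) (\<phi> y)) \<and> (\<forall>x y. \<phi> (x * y) = ml (\<phi> x) (\<phi> y))"

text \<open>Finite separability. Every finite ring is isomorphic to one whose carrier is
  a set of natural numbers, so the finite ring F is taken with carrier in nat.\<close>
definition finitely_separable :: "'a::ring itself \<Rightarrow> bool" where
  "finitely_separable _ \<longleftrightarrow>
     (\<forall>(a::'a) A. subring A \<longrightarrow> a \<notin> A \<longrightarrow>
        (\<exists>(F::nat set) pl ml z ng \<phi>. finite F \<and> is_ring F pl ml z ng \<and>
            is_ring_hom \<phi> F pl ml \<and> \<phi> a \<notin> \<phi> ` A))"

end

theory Submission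
  imports Defs "HOL-Library.Set_Algebras"
begin

text \<open>Every subgroup B of a finitely generated abelian group G is closed in the profinite
  topology: for x \<notin> B there is n > 0 with x \<notin> B + nG. This goes by induction on the
  generators. Write G = \<int>s + G'; the quotient G/(B + G') is cyclic. If it is finite of
  order k, then kG \<subseteq> B + G', which lets a multiplier that works for G' be scaled by k to
  work for G; if it is infinite, no nonzero multiple of s lies in B + G'.
  For a subring A of K and a \<notin> A this gives n with a \<notin> A + nK, and the finite ring
  K/nK separates a from A.\<close>

primrec nsmult :: "nat \<Rightarrow> 'a::ab_group_add \<Rightarrow> 'a" where
  "nsmult 0 x = 0"
| "nsmult (Suc n) x = x + nsmult n x"

lemma nsmult_add_left: "nsmult (m + n) x = nsmult m x + nsmult n x"
  by (induct m) (simp_all add: add.assoc)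

lemma nsmult_add_right: "nsmult n (x + y) = nsmult n x + nsmult n y"
  by (induct n) (simp_all add: algebra_simps)

lemma nsmult_minus_right: "nsmult n (- x) = - nsmult n x"
  by (induct n) (simp_all add: algebra_simps)

lemma nsmult_diff_right: "nsmult n (x - y) = nsmult n x - nsmult n y"
  by (metis nsmult_add_right nsmult_minus_right diff_conv_add_uminus)

lemma nsmult_mult: "nsmult (m * n) x = nsmult m (nsmult n x)"
  by (induct m) (simp_all add: nsmult_add_left)

lemma nsmult_mult_left: "nsmult n (x::'a::ring) * y = nsmult n (x * y)"
  by (induct n) (simp_all add: algebra_simps)

lemma nsmult_mult_right: "(x::'a::ring) * nsmult n y = nsmult n (x * y)"
  by (induct n) (simp_all add: algebra_simps)

definition zsmult :: "int \<Rightarrow> 'a::ab_group_add \<Rightarrow> 'a" where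
  "zsmult k x = nsmult (nat k) x - nsmult (nat (- k)) x"

lemma zsmult_of_nat_diff: "zsmult (int a - int b) x = nsmult a x - nsmult b x"
proof -
  let ?k = "int a - int b"
  have "nat ?k + b = a + nat (- ?k)" by arith
  then have "nsmult (nat ?k) x + nsmult b x = nsmult a x + nsmult (nat (- ?k)) x"
    by (metis nsmult_add_left)
  then show ?thesis unfolding zsmult_def by (simp add: algebra_simps)
qed

lemma int_eq_of_nat_diff: obtains a b where "(k::int) = int a - int b"
proof
  show "k = int (nat k) - int (nat (- k))" by arith
qed

lemma zsmult_add_left: "zsmult (k + l) x = zsmult k x + zsmult l x"
proof -
  obtain a b c d where k: "k = int a - int b" and l: "l = int c - int d"
    using int_eq_of_nat_diff by metis
  have "k + l = int (a + c) - int (b + d)" unfolding k l by simp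
  then have "zsmult (k + l) x = nsmult (a + c) x - nsmult (b + d) x"
    by (simp only: zsmult_of_nat_diff)
  also have "\<dots> = zsmult k x + zsmult l x"
    unfolding k l zsmult_of_nat_diff nsmult_add_left
    by (simp add: diff_add_eq add_diff_eq diff_diff_eq add.assoc add.left_commute)
  finally show ?thesis .
qed

lemma zsmult_mult: "zsmult (k * l) x = zsmult k (zsmult l x)"
proof -
  obtain a b c d where k: "k = int a - int b" and l: "l = int c - int d"
    using int_eq_of_nat_diff by metis
  have "k * l = int (a * c + b * d) - int (a * d + b * c)" unfolding k l by (simp add: algebra_simps)
  then have "zsmult (k * l) x = nsmult (a * c + b * d) x - nsmult (a * d + b * c) x"
    by (simp only: zsmult_of_nat_diff)
  also have "\<dots> = zsmult k (zsmult l x)"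
    unfolding k l zsmult_of_nat_diff nsmult_diff_right
    by (simp add: nsmult_add_left nsmult_mult algebra_simps)
  finally show ?thesis .
qed

lemma zsmult_add_right: "zsmult k (x + y) = zsmult k x + zsmult k y"
  unfolding zsmult_def by (simp add: nsmult_add_right algebra_simps)

lemma zsmult_minus_left: "zsmult (- k) x = - zsmult k x"
  unfolding zsmult_def by simp

lemma zsmult_diff_left: "zsmult (k - l) x = zsmult k x - zsmult l x"
  using zsmult_add_left[of k "- l" x] by (simp add: zsmult_minus_left)

lemma zsmult_minus_right: "zsmult k (- x) = - zsmult k x"
  unfolding zsmult_def by (simp add: nsmult_minus_right)

lemma zsmult_0_left [simp]: "zsmult 0 x = 0"
  unfolding zsmult_def by simp

lemma zsmult_1_left [simp]: "zsmult 1 x = x"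
  unfolding zsmult_def by simp

lemma zsmult_0_right [simp]: "zsmult k 0 = 0"
  using zsmult_add_right[of k 0 0] by simp

lemma zsmult_mult_left: "zsmult k (x::'a::ring) * y = zsmult k (x * y)"
  unfolding zsmult_def by (simp add: nsmult_mult_left algebra_simps)

lemma zsmult_mult_right: "(x::'a::ring) * zsmult k y = zsmult k (x * y)"
  unfolding zsmult_def by (simp add: nsmult_mult_right algebra_simps)

definition add_subgroup :: "'a::ab_group_add set \<Rightarrow> bool" where
  "add_subgroup B \<longleftrightarrow> 0 \<in> B \<and> (\<forall>x\<in>B. \<forall>y\<in>B. x + y \<in> B \<and> - x \<in> B)"

lemma add_subgroupD:
  assumes "add_subgroup B"
  shows add_subgroup_0: "0 \<in> B"
    and add_subgroup_add: "x \<in> B \<Longrightarrow> y \<in> B \<Longrightarrow> x + y \<in> B"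
    and add_subgroup_minus: "x \<in> B \<Longrightarrow> - x \<in> B"
    and add_subgroup_diff: "x \<in> B \<Longrightarrow> y \<in> B \<Longrightarrow> x - y \<in> B"
  using assms unfolding add_subgroup_def
  by (auto simp del: add_uminus_conv_diff simp add: diff_conv_add_uminus)

lemma add_subgroup_nsmult: "add_subgroup B \<Longrightarrow> x \<in> B \<Longrightarrow> nsmult n x \<in> B"
  by (induct n) (auto intro: add_subgroupD)

lemma add_subgroup_zsmult: "add_subgroup B \<Longrightarrow> x \<in> B \<Longrightarrow> zsmult k x \<in> B"
  unfolding zsmult_def by (intro add_subgroup_diff add_subgroup_nsmult)

lemma add_subgroup_Int: "add_subgroup B \<Longrightarrow> add_subgroup C \<Longrightarrow> add_subgroup (B \<inter> C)"
  unfolding add_subgroup_def by auto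

lemma add_subgroup_set_plus:
  assumes B: "add_subgroup B" and C: "add_subgroup C"
  shows "add_subgroup (B + C)"
  unfolding add_subgroup_def
proof (intro conjI ballI)
  show "0 \<in> B + C"
    using set_plus_intro[OF add_subgroup_0[OF B] add_subgroup_0[OF C]] by simp
next
  fix x y assume "x \<in> B + C" "y \<in> B + C"
  then obtain b c b' c' where xy: "x = b + c" "y = b' + c'"
    and mem: "b \<in> B" "c \<in> C" "b' \<in> B" "c' \<in> C"
    by (elim set_plus_elim)
  have "(b + b') + (c + c') \<in> B + C" "- b + - c \<in> B + C"
    using mem B C by (metis set_plus_intro add_subgroup_add add_subgroup_minus)+
  then show "x + y \<in> B + C" "- x \<in> B + C"
    unfolding xy by (simp_all add: ac_simps)
qed

lemma add_subgroup_add_span: "add_subgroup (add_span S)"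
  unfolding add_subgroup_def by (auto intro: add_span.intros)

lemma add_span_mono: "x \<in> add_span S \<Longrightarrow> S \<subseteq> T \<Longrightarrow> x \<in> add_span T"
  by (induct rule: add_span.induct) (auto intro: add_span.intros)

lemma add_span_empty: "add_span {} = {0}"
proof -
  have "x \<in> add_span {} \<Longrightarrow> x = 0" for x :: 'a
    by (induct rule: add_span.induct) auto
  then show ?thesis by (auto intro: add_span.intros)
qed

lemma add_span_insert: "add_span (insert s S) = range (\<lambda>t. zsmult t s) + add_span S"
proof
  show "add_span (insert s S) \<subseteq> range (\<lambda>t. zsmult t s) + add_span S"
  proof
    fix x assume "x \<in> add_span (insert s S)"
    have mem: "zsmult t s + y \<in> range (\<lambda>t. zsmult t s) + add_span S"
      if "y \<in> add_span S" for t y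
      using that by auto
    show "x \<in> range (\<lambda>t. zsmult t s) + add_span S"
      using \<open>x \<in> add_span (insert s S)\<close>
    proof (induct rule: add_span.induct)
      case (gen x)
      then show ?case
        using mem[of 0 1] mem[of x 0] by (auto intro: add_span.intros)
    next
      case zero
      then show ?case using mem[of 0 0] by (simp add: add_span.zero)
    next
      case (add x y)
      then obtain t u x' y' where "x = zsmult t s + x'" "y = zsmult u s + y'"
        "x' \<in> add_span S" "y' \<in> add_span S"
        by (auto elim!: set_plus_elim)
      then show ?case
        using mem[of "x' + y'" "t + u"] by (simp add: zsmult_add_left add_span.add ac_simps)
    next
      case (neg x)
      then obtain t x' where "x = zsmult t s + x'" "x' \<in> add_span S"
        by (auto elim!: set_plus_elim)
      then show ?case
        using mem[of "- x'" "- t"] by (simp add: zsmult_minus_left add_span.neg)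
    qed
  qed
next
  show "range (\<lambda>t. zsmult t s) + add_span S \<subseteq> add_span (insert s S)"
  proof
    fix x assume "x \<in> range (\<lambda>t. zsmult t s) + add_span S"
    then obtain a y where x: "x = a + y" and a: "a \<in> range (\<lambda>t. zsmult t s)"
      and y: "y \<in> add_span S"
      by (rule set_plus_elim)
    from a obtain t where t: "a = zsmult t s" by blast
    have "zsmult t s \<in> add_span (insert s S)"
      by (intro add_subgroup_zsmult add_subgroup_add_span) (auto intro: add_span.gen)
    moreover have "y \<in> add_span (insert s S)"
      using y by (rule add_span_mono) auto
    ultimately show "x \<in> add_span (insert s S)"
      unfolding x t by (rule add_span.add)
  qed
qed

lemma add_subgroup_range_zsmult: "add_subgroup (range (zsmult n))"
  unfolding add_subgroup_def
  by (metis rangeI zsmult_0_right zsmult_add_right zsmult_minus_right rangeE)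

lemma zsmult_image_subset:
  assumes "add_subgroup H" "add_span S \<subseteq> H" "zsmult k s \<in> H"
  shows "zsmult k ` add_span (insert s S) \<subseteq> H"
proof
  fix v assume "v \<in> zsmult k ` add_span (insert s S)"
  then obtain u w where v: "v = zsmult k (zsmult u s + w)" and w: "w \<in> add_span S"
    unfolding add_span_insert by (auto elim!: set_plus_elim)
  have "v = zsmult u (zsmult k s) + zsmult k w"
    unfolding v zsmult_add_right zsmult_mult[symmetric] by (simp add: mult.commute)
  moreover have "zsmult u (zsmult k s) \<in> H"
    using assms(1,3) by (rule add_subgroup_zsmult)
  moreover have "zsmult k w \<in> H"
    using assms(1) subsetD[OF assms(2) w] by (rule add_subgroup_zsmult)
  ultimately show "v \<in> H"
    using add_subgroup_add[OF assms(1)] by simp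
qed

lemma zsmult_mem_subgroup_eq_0:
  assumes "add_subgroup H" "\<forall>k>0. zsmult k s \<notin> H" "zsmult t s \<in> H"
  shows "t = 0"
proof (rule ccontr)
  assume "t \<noteq> 0"
  then consider "t > 0" | "- t > 0" by linarith
  then show False
  proof cases
    case 2
    have "zsmult (- t) s \<in> H"
      unfolding zsmult_minus_left using assms by (intro add_subgroup_minus)
    with 2 assms(2) show False by blast
  qed (use assms in blast)
qed

lemma separating_multiple_cyclic_extension:
  assumes B: "add_subgroup B"
    and x: "x \<in> add_span (insert s S)" "x \<notin> B + add_span S"
  shows "\<exists>n>0. x \<notin> B + zsmult n ` add_span (insert s S)"
proof -
  define H where "H = B + add_span S"
  have H: "add_subgroup H"
    unfolding H_def using B add_subgroup_add_span by (rule add_subgroup_set_plus)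
  have BH: "B \<subseteq> H"
    unfolding H_def using add_span.zero set_zero_plus2 add.commute by metis
  have SH: "add_span S \<subseteq> H"
    unfolding H_def using B add_subgroup_0 set_zero_plus2 by blast
  show ?thesis
  proof (cases "\<exists>k>0. zsmult k s \<in> H")
    case True
    then obtain k where k: "k > 0" "zsmult k s \<in> H" by blast
    have "B + zsmult k ` add_span (insert s S) \<subseteq> H"
      using zsmult_image_subset[OF H SH k(2)] BH add_subgroup_add[OF H]
      by (auto elim!: set_plus_elim)
    with k(1) x(2) show ?thesis unfolding H_def by blast
  next
    case False
    obtain x0 x' where x0: "x = zsmult x0 s + x'" and x': "x' \<in> add_span S"
      using x(1) unfolding add_span_insert by (auto elim!: set_plus_elim)
    define n where "n = \<bar>x0\<bar> + 1"
    have "n > 0" unfolding n_def by simp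
    have "x \<notin> B + zsmult n ` add_span (insert s S)"
    proof
      assume "x \<in> B + zsmult n ` add_span (insert s S)"
      then obtain b u w where b: "b \<in> B" and w: "w \<in> add_span S"
        and eq: "x = b + zsmult n (zsmult u s + w)"
        unfolding add_span_insert by (auto elim!: set_plus_elim)
      have "zsmult (x0 - n * u) s = b + (zsmult n w - x')"
        using eq unfolding x0 zsmult_diff_left zsmult_mult zsmult_add_right
        by (simp add: algebra_simps)
      also have "\<dots> \<in> H"
        unfolding H_def using b w x' add_subgroup_add_span
        by (intro set_plus_intro add_subgroup_diff add_subgroup_zsmult)
      finally have "x0 = n * u"
        using zsmult_mem_subgroup_eq_0[OF H] False by fastforce
      then have abs_x0: "\<bar>x0\<bar> = n * \<bar>u\<bar>"
        using \<open>n > 0\<close> by (simp add: abs_mult)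
      have "u = 0"
      proof (rule ccontr)
        assume "u \<noteq> 0"
        then have "n * 1 \<le> n * \<bar>u\<bar>"
          using \<open>n > 0\<close> by (intro mult_left_mono) auto
        with abs_x0 show False unfolding n_def by simp
      qed
      with \<open>x0 = n * u\<close> have "x0 = 0" by simp
      then have "x \<in> H"
        using x0 x' SH by auto
      with x(2) show False unfolding H_def by blast
    qed
    with \<open>n > 0\<close> show ?thesis by blast
  qed
qed

lemma cyclic_extension_multiples_Int:
  assumes B: "add_subgroup B"
  obtains m :: int where "m > 0"
    and "\<And>n g. g \<in> add_span S \<Longrightarrow> g \<notin> (B \<inter> add_span S) + zsmult n ` add_span S \<Longrightarrow>
           g \<notin> B + zsmult (n * m) ` add_span (insert s S)"
proof -
  define H where "H = B + add_span S"
  have H: "add_subgroup H"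
    unfolding H_def using B add_subgroup_add_span by (rule add_subgroup_set_plus)
  have SH: "add_span S \<subseteq> H"
    unfolding H_def using B add_subgroup_0 set_zero_plus2 by blast
  show ?thesis
  proof (cases "\<exists>k>0. zsmult k s \<in> H")
    case True
    then obtain k where k: "k > 0" "zsmult k s \<in> H" by blast
    show ?thesis
    proof (rule that[OF k(1)], rule notI)
      fix n g assume g: "g \<in> add_span S" "g \<notin> (B \<inter> add_span S) + zsmult n ` add_span S"
        and "g \<in> B + zsmult (n * k) ` add_span (insert s S)"
      then obtain b w where b: "b \<in> B" and w: "w \<in> add_span (insert s S)"
        and eq: "g = b + zsmult n (zsmult k w)"
        by (auto elim!: set_plus_elim simp: zsmult_mult)
      from zsmult_image_subset[OF H SH k(2)] w obtain b' g' where
        b': "b' \<in> B" and g': "g' \<in> add_span S" and kw: "zsmult k w = b' + g'"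
        unfolding H_def by (auto elim!: set_plus_elim)
      have g_eq: "g = (b + zsmult n b') + zsmult n g'"
        using eq unfolding kw zsmult_add_right by (simp add: add.assoc)
      have "b + zsmult n b' = g - zsmult n g'"
        using g_eq by simp
      also have "\<dots> \<in> add_span S"
        using g(1) g' add_subgroup_add_span by (intro add_subgroup_diff add_subgroup_zsmult)
      finally have "b + zsmult n b' \<in> B \<inter> add_span S"
        using b b' B by (auto intro: add_subgroup_add add_subgroup_zsmult)
      then have "g \<in> (B \<inter> add_span S) + zsmult n ` add_span S"
        unfolding g_eq using g' by (intro set_plus_intro) auto
      with g(2) show False ..
    qed
  next
    case False
    show ?thesis
    proof (rule that[of 1], simp, rule notI)
      fix n g assume g: "g \<in> add_span S" "g \<notin> (B \<inter> add_span S) + zsmult n ` add_span S"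
        and "g \<in> B + zsmult (n * 1) ` add_span (insert s S)"
      then obtain b u w where b: "b \<in> B" and w: "w \<in> add_span S"
        and eq: "g = b + zsmult n (zsmult u s + w)"
        unfolding add_span_insert by (auto elim!: set_plus_elim)
      have "zsmult (n * u) s = - b + (g - zsmult n w)"
        using eq by (simp add: zsmult_add_right zsmult_mult algebra_simps)
      also have "\<dots> \<in> H"
        unfolding H_def using b g(1) w B add_subgroup_add_span
        by (intro set_plus_intro add_subgroup_minus add_subgroup_diff add_subgroup_zsmult)
      finally have "n * u = 0"
        using zsmult_mem_subgroup_eq_0[OF H] False by blast
      then have "zsmult n (zsmult u s) = 0"
        by (simp only: zsmult_mult[symmetric] zsmult_0_left)
      then have "g = b + zsmult n w"
        using eq by (simp add: zsmult_add_right)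
      moreover have "b \<in> add_span S"
        using \<open>g = b + zsmult n w\<close> g(1) w add_subgroup_add_span
        by (metis add_diff_cancel_right' add_subgroup_diff add_subgroup_zsmult)
      ultimately show False
        using g(2) b w by blast
    qed
  qed
qed

lemma finitely_generated_subgroup_separable:
  assumes "finite S" "add_subgroup B" "x \<in> add_span S" "x \<notin> B"
  shows "\<exists>n>0. x \<notin> B + zsmult n ` add_span S"
  using assms
proof (induction S arbitrary: B x rule: finite_induct)
  case empty
  then show ?case by (simp add: add_span_empty add_subgroup_0)
next
  case (insert s S)
  show ?case
  proof (cases "x \<in> B + add_span S")
    case True
    then obtain b g where b: "b \<in> B" and g: "g \<in> add_span S" and x: "x = b + g"
      by (auto elim: set_plus_elim)
    have "g \<notin> B \<inter> add_span S"
      using b x insert.prems(1,3) add_subgroup_add by blast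
    then obtain n where n: "n > 0" "g \<notin> (B \<inter> add_span S) + zsmult n ` add_span S"
      using insert.IH insert.prems(1) g add_subgroup_Int add_subgroup_add_span by blast
    obtain m where m: "m > 0"
      "g \<notin> B + zsmult (n * m) ` add_span (insert s S)"
      using cyclic_extension_multiples_Int[OF insert.prems(1)] n(2) g by metis
    have "x \<notin> B + zsmult (n * m) ` add_span (insert s S)"
    proof
      assume "x \<in> B + zsmult (n * m) ` add_span (insert s S)"
      then obtain b' v where "b' \<in> B" "v \<in> zsmult (n * m) ` add_span (insert s S)"
        "x = b' + v"
        by (rule set_plus_elim)
      moreover have "b' - b \<in> B"
        using insert.prems(1) \<open>b' \<in> B\<close> b by (rule add_subgroup_diff)
      ultimately have "g \<in> B + zsmult (n * m) ` add_span (insert s S)"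
        using x by (metis add_diff_cancel_left' diff_add_eq set_plus_intro)
      with m(2) show False ..
    qed
    then show ?thesis using n(1) m(1) by (intro exI[of _ "n * m"]) simp
  next
    case False
    with insert.prems(1,2) show ?thesis by (rule separating_multiple_cyclic_extension)
  qed
qed

lemma finite_residues_mod_multiples:
  assumes "finite S" "n > 0"
  shows "\<exists>F. finite F \<and> add_span S \<subseteq> F + range (zsmult n)"
  using assms(1)
proof (induction S rule: finite_induct)
  case empty
  have "(0::'a) \<in> {0} + range (zsmult n)"
    using set_plus_intro[OF singletonI rangeI, of 0 "zsmult n" 0] by simp
  then have "add_span ({} :: 'a set) \<subseteq> {0} + range (zsmult n)"
    by (simp add: add_span_empty)
  then show ?case by blast
next
  case (insert s S)
  then obtain F where F: "finite F" "add_span S \<subseteq> F + range (zsmult n)" by blast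
  let ?F = "(\<lambda>r. zsmult r s) ` {0..<n} + F"
  have "add_span (insert s S) \<subseteq> ?F + range (zsmult n)"
  proof
    fix x assume "x \<in> add_span (insert s S)"
    then obtain t y where x: "x = zsmult t s + y" and "y \<in> add_span S"
      unfolding add_span_insert by (auto elim!: set_plus_elim)
    with F(2) obtain f w where f: "f \<in> F" and y: "y = f + zsmult n w"
      by (auto elim!: set_plus_elim)
    have "zsmult t s = zsmult (t mod n) s + zsmult n (zsmult (t div n) s)"
      by (metis mod_mult_div_eq zsmult_add_left zsmult_mult mult.commute add.commute)
    then have "x = (zsmult (t mod n) s + f) + zsmult n (zsmult (t div n) s + w)"
      unfolding x y zsmult_add_right by (simp add: ac_simps)
    moreover have "zsmult (t mod n) s + f \<in> ?F"
      using f assms(2) by (intro set_plus_intro) auto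
    ultimately show "x \<in> ?F + range (zsmult n)" by auto
  qed
  moreover have "finite ?F"
    using F(1) by (intro finite_set_plus) auto
  ultimately show ?case by blast
qed

lemma finite_index_subgroup_kernel:
  fixes N :: "'a::ab_group_add set"
  assumes N: "add_subgroup N" and "finite F" "UNIV \<subseteq> F + N"
  obtains \<phi> :: "'a \<Rightarrow> nat" where "finite (range \<phi>)" "\<And>x y. \<phi> x = \<phi> y \<longleftrightarrow> x - y \<in> N"
proof -
  define coset where "coset x = {y. x - y \<in> N}" for x
  have coset_eq: "coset x = coset y \<longleftrightarrow> x - y \<in> N" for x y
  proof
    assume "coset x = coset y"
    moreover have "x \<in> coset x" unfolding coset_def using add_subgroup_0[OF N] by simp
    ultimately have "y - x \<in> N" unfolding coset_def by blast
    then show "x - y \<in> N" using add_subgroup_minus[OF N] by fastforce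
  next
    assume xy: "x - y \<in> N"
    have "x - z \<in> N \<longleftrightarrow> y - z \<in> N" for z
      using add_subgroup_add[OF N xy, of "y - z"] add_subgroup_diff[OF N _ xy, of "x - z"]
      by auto
    then show "coset x = coset y" unfolding coset_def by blast
  qed
  have "range coset \<subseteq> coset ` F"
  proof safe
    fix x
    from subsetD[OF assms(3) UNIV_I] obtain f m where "x = f + m" "f \<in> F" "m \<in> N"
      by (rule set_plus_elim)
    then show "coset x \<in> coset ` F" using coset_eq[of x f] by auto
  qed
  then have fin: "finite (range coset)"
    using \<open>finite F\<close> finite_surj by blast
  then obtain g :: "'a set \<Rightarrow> nat" and k where g: "inj_on g (range coset)"
    using finite_imp_inj_to_nat_seg by blast
  show ?thesis
  proof
    show "finite (range (g \<circ> coset))"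
      using finite_imageI[OF fin, of g] by (simp add: image_comp)
    show "(g \<circ> coset) x = (g \<circ> coset) y \<longleftrightarrow> x - y \<in> N" for x y
      using inj_on_eq_iff[OF g rangeI rangeI] coset_eq by simp
  qed
qed

lemma finite_ring_on_range:
  fixes \<phi> :: "'a::ring \<Rightarrow> nat"
  assumes fin: "finite (range \<phi>)"
    and cadd: "\<And>x x' y y'. \<phi> x = \<phi> x' \<Longrightarrow> \<phi> y = \<phi> y' \<Longrightarrow> \<phi> (x + y) = \<phi> (x' + y')"
    and cmul: "\<And>x x' y y'. \<phi> x = \<phi> x' \<Longrightarrow> \<phi> y = \<phi> y' \<Longrightarrow> \<phi> (x * y) = \<phi> (x' * y')"
    and cneg: "\<And>x x'. \<phi> x = \<phi> x' \<Longrightarrow> \<phi> (- x) = \<phi> (- x')"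
  shows "\<exists>(F::nat set) pl ml z ng. finite F \<and> is_ring F pl ml z ng \<and> is_ring_hom \<phi> F pl ml"
proof -
  define r where "r = inv \<phi>"
  have r: "\<phi> (r (\<phi> x)) = \<phi> x" for x unfolding r_def by (simp add: f_inv_into_f)
  define pl where "pl i j = \<phi> (r i + r j)" for i j
  define ml where "ml i j = \<phi> (r i * r j)" for i j
  define ng where "ng i = \<phi> (- r i)" for i
  have pl: "pl (\<phi> x) (\<phi> y) = \<phi> (x + y)" for x y unfolding pl_def by (rule cadd[OF r r])
  have ml: "ml (\<phi> x) (\<phi> y) = \<phi> (x * y)" for x y unfolding ml_def by (rule cmul[OF r r])
  have ng: "ng (\<phi> x) = \<phi> (- x)" for x unfolding ng_def by (rule cneg[OF r])
  have ball_range: "(\<forall>i\<in>range \<phi>. P i) \<longleftrightarrow> (\<forall>x. P (\<phi> x))" for P by auto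
  have "is_ring (range \<phi>) pl ml (\<phi> 0) ng"
    unfolding is_ring_def ball_range pl ml ng by (simp add: algebra_simps)
  moreover have "is_ring_hom \<phi> (range \<phi>) pl ml"
    unfolding is_ring_hom_def pl ml by simp
  ultimately show ?thesis using fin by blast
qed

lemma finite_quotient_ring:
  fixes N :: "'a::ring set"
  assumes N: "add_subgroup N"
    and ideal: "\<And>x y. x \<in> N \<Longrightarrow> x * y \<in> N" "\<And>x y. y \<in> N \<Longrightarrow> x * y \<in> N"
    and "finite F" "UNIV \<subseteq> F + N"
  shows "\<exists>(R::nat set) pl ml z ng \<phi>. finite R \<and> is_ring R pl ml z ng \<and>
           is_ring_hom \<phi> R pl ml \<and> (\<forall>x y. \<phi> x = \<phi> y \<longleftrightarrow> x - y \<in> N)"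
proof -
  obtain \<phi> :: "'a \<Rightarrow> nat" where fin: "finite (range \<phi>)"
    and ker: "\<And>x y. \<phi> x = \<phi> y \<longleftrightarrow> x - y \<in> N"
    using finite_index_subgroup_kernel[OF N \<open>finite F\<close> \<open>UNIV \<subseteq> F + N\<close>] by blast
  have "\<exists>(R::nat set) pl ml z ng. finite R \<and> is_ring R pl ml z ng \<and> is_ring_hom \<phi> R pl ml"
  proof (rule finite_ring_on_range[OF fin])
    fix x x' y y' assume "\<phi> x = \<phi> x'" "\<phi> y = \<phi> y'"
    then have x: "x - x' \<in> N" and y: "y - y' \<in> N" by (simp_all add: ker)
    have "(x + y) - (x' + y') = (x - x') + (y - y')" by simp
    then show "\<phi> (x + y) = \<phi> (x' + y')"
      unfolding ker using add_subgroup_add[OF N x y] by (simp only:)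
    have "x * y - x' * y' = (x - x') * y + x' * (y - y')" by (simp add: algebra_simps)
    then show "\<phi> (x * y) = \<phi> (x' * y')"
      unfolding ker using add_subgroup_add[OF N ideal(1)[OF x] ideal(2)[OF y]] by (simp only:)
  next
    fix x x' assume "\<phi> x = \<phi> x'"
    then have "x - x' \<in> N" by (simp add: ker)
    then show "\<phi> (- x) = \<phi> (- x')"
      using add_subgroup_minus[OF N] by (fastforce simp: ker)
  qed
  with ker show ?thesis by blast
qed

theorem lemma5:
  assumes "add_fin_gen TYPE('a::ring)"
  shows "finitely_separable TYPE('a)"
  unfolding finitely_separable_def
proof (intro allI impI)
  fix a :: 'a and A assume "subring A" "a \<notin> A"
  obtain S :: "'a set" where S: "finite S" "add_span S = UNIV"
    using assms unfolding add_fin_gen_def by blast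
  have A: "add_subgroup A"
    using \<open>subring A\<close> unfolding subring_def add_subgroup_def by blast
  obtain n where n: "n > 0" "a \<notin> A + range (zsmult n)"
    using finitely_generated_subgroup_separable[OF S(1) A, of a] S(2) \<open>a \<notin> A\<close> by auto
  obtain F :: "'a set" where F: "finite F" "UNIV \<subseteq> F + range (zsmult n)"
    using finite_residues_mod_multiples[OF S(1) n(1)] unfolding S(2) by blast
  have ideal: "x * y \<in> range (zsmult n)" "y * x \<in> range (zsmult n)"
    if "x \<in> range (zsmult n)" for x y :: 'a
    using that by (auto simp: zsmult_mult_left zsmult_mult_right)
  obtain R :: "nat set" and pl ml z ng and \<phi> :: "'a \<Rightarrow> nat" where ring: "finite R" "is_ring R pl ml z ng" "is_ring_hom \<phi> R pl ml"
    and ker: "\<And>x y. \<phi> x = \<phi> y \<longleftrightarrow> x - y \<in> range (zsmult n)"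
    using finite_quotient_ring[OF add_subgroup_range_zsmult ideal F] by blast
  have "\<phi> a \<notin> \<phi> ` A"
  proof
    assume "\<phi> a \<in> \<phi> ` A"
    then obtain b where "b \<in> A" "a - b \<in> range (zsmult n)" using ker by blast
    then have "b + (a - b) \<in> A + range (zsmult n)" by (rule set_plus_intro)
    with n(2) show False by simp
  qed
  with ring show "\<exists>(F::nat set) pl ml z ng \<phi>. finite F \<and> is_ring F pl ml z ng \<and>
      is_ring_hom \<phi> F pl ml \<and> \<phi> a \<notin> \<phi> ` A"
    by blast
qed

end
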